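(* Let $\boldsymbol{u}^\star\in\mathbb{R}^n\setminus\{\boldsymbol{0}\}$ and $f(\boldsymbol{u})=\frac12\|\boldsymbol{u}\boldsymbol{u}^{\mathrm T}-\boldsymbol{u}^\star{\boldsymbol{u}^\star}^{\mathrm T}\|_1$ on $\mathbb{R}^n$. Then for every $\boldsymbol{w}\in\mathbb{R}^n$, $$df(\boldsymbol{u}^\star)(\boldsymbol{w})\ge\min\Big\{\alpha(\boldsymbol{u}^\star),\ \tfrac12\alpha(\boldsymbol{u}^\star)\,|\operatorname{supp}(\boldsymbol{u}^\star)|\Big\}\cdot\|\boldsymbol{w}\|_1,$$ where $\alpha(\boldsymbol{u}^\star):=\min\{|u_i^\star|:i\in\operatorname{supp}(\boldsymbol{u}^\star)\}>0$.
   Context: $\|\cdot\|_1$ is the entrywise $\ell_1$-norm (for vectors and matrices). $\operatorname{supp}(\boldsymbol{x})=\{i:x_i\ne0\}$. $df(\boldsymbol{x})(\boldsymbol{w})=\lim_{t\searrow0}(f(\boldsymbol{x}+t\boldsymbol{w})-f(\boldsymbol{x}))/t$ is the directional derivative (which exists for this $f$). *)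

theory Defs
  imports "HOL-Analysis.Analysis"
begin

definition l1norm :: "real ^ 'n \<Rightarrow> real" where
  "l1norm w = (\<Sum>i\<in>UNIV. \<bar>w $ i\<bar>)"

definition supp :: "real ^ 'n \<Rightarrow> 'n set" where
  "supp u = {i. u $ i \<noteq> 0}"

definition alpha :: "real ^ 'n \<Rightarrow> real" where
  "alpha u = Min ((\<lambda>i. \<bar>u $ i\<bar>) ` supp u)"

definition fobj :: "real ^ 'n \<Rightarrow> real ^ 'n \<Rightarrow> real" where
  "fobj ustar u = (1/2) * (\<Sum>i\<in>UNIV. \<Sum>j\<in>UNIV. \<bar>u $ i * u $ j - ustar $ i * ustar $ j\<bar>)"

definition dir_deriv :: "(real ^ 'n \<Rightarrow> real) \<Rightarrow> real ^ 'n \<Rightarrow> real ^ 'n \<Rightarrow> real" where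
  "dir_deriv f x w = Lim (at_right 0) (\<lambda>t. (f (x + t *\<^sub>R w) - f x) / t)"

end

theory Submission
  imports Defs
begin

(*
  Expanding (u + t w)(u + t w)^T - u u^T = t (u w^T + w u^T + t w w^T) gives
  df(u)(w) = 1/2 sum_ij |u_i w_j + w_i u_j|.  Bound the inner sum column by column:
  a column j in the support contains the diagonal entry 2 |u_j w_j| >= 2 alpha |w_j|,
  while a column j off the support equals |u|_1 |w_j| >= alpha |supp u| |w_j|.
*)

lemma alpha_le_abs:
  fixes u :: "real ^ 'n"
  assumes "i \<in> supp u"
  shows "alpha u \<le> \<bar>u $ i\<bar>"
  unfolding alpha_def using assms by (intro Min_le) auto

lemma alpha_mult_card_supp_le_l1norm:
  fixes u :: "real ^ 'n"
  shows "alpha u * real (card (supp u)) \<le> l1norm u"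
proof -
  have "alpha u * real (card (supp u)) = (\<Sum>i\<in>supp u. alpha u)" by simp
  also have "\<dots> \<le> (\<Sum>i\<in>supp u. \<bar>u $ i\<bar>)" by (intro sum_mono alpha_le_abs)
  also have "\<dots> \<le> l1norm u" unfolding l1norm_def by (intro sum_mono2) auto
  finally show ?thesis .
qed

lemma dir_deriv_eqI:
  fixes f :: "real ^ 'n \<Rightarrow> real"
  assumes "\<forall>\<^sub>F t in at_right 0. f (x + t *\<^sub>R w) - f x = t * h t"
    and "continuous (at_right 0) h"
  shows "dir_deriv f x w = h 0"
proof -
  have "\<forall>\<^sub>F t in at_right 0. h t = (f (x + t *\<^sub>R w) - f x) / t"
    using assms(1) eventually_at_right_less
    by eventually_elim simp
  moreover have "(h \<longlongrightarrow> h 0) (at_right 0)"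
    using assms(2) by (simp add: continuous_within)
  ultimately have "((\<lambda>t. (f (x + t *\<^sub>R w) - f x) / t) \<longlongrightarrow> h 0) (at_right 0)"
    by (rule Lim_transform_eventually[rotated])
  then show ?thesis
    unfolding dir_deriv_def by (intro tendsto_Lim) (simp_all add: trivial_limit_at_right_real)
qed

lemma fobj_self_add:
  fixes u w :: "real ^ 'n"
  assumes "t \<ge> 0"
  shows "fobj u (u + t *\<^sub>R w) - fobj u u
    = t * ((1/2) * (\<Sum>i\<in>UNIV. \<Sum>j\<in>UNIV. \<bar>u $ i * w $ j + w $ i * u $ j + t * (w $ i * w $ j)\<bar>))"
proof -
  have "(u + t *\<^sub>R w) $ i * (u + t *\<^sub>R w) $ j - u $ i * u $ j
      = t * (u $ i * w $ j + w $ i * u $ j + t * (w $ i * w $ j))" for i j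
    by (simp add: algebra_simps)
  then show ?thesis
    using assms by (simp add: fobj_def abs_mult sum_distrib_left)
qed

lemma dir_deriv_fobj_self:
  fixes u w :: "real ^ 'n"
  shows "dir_deriv (fobj u) u w = (1/2) * (\<Sum>i\<in>UNIV. \<Sum>j\<in>UNIV. \<bar>u $ i * w $ j + w $ i * u $ j\<bar>)"
proof -
  define h where "h t = (1/2) * (\<Sum>i\<in>UNIV. \<Sum>j\<in>UNIV. \<bar>u $ i * w $ j + w $ i * u $ j + t * (w $ i * w $ j)\<bar>)"
    for t :: real
  have "\<forall>\<^sub>F t in at_right 0. fobj u (u + t *\<^sub>R w) - fobj u u = t * h t"
    using eventually_at_right_less by eventually_elim (simp add: h_def fobj_self_add)
  moreover have "continuous (at_right 0) h"
    unfolding h_def by (intro continuous_intros)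
  ultimately have "dir_deriv (fobj u) u w = h 0"
    by (rule dir_deriv_eqI)
  then show ?thesis
    by (simp add: h_def)
qed

lemma column_sum_ge_in_supp:
  fixes u w :: "real ^ 'n"
  assumes "j \<in> supp u"
  shows "2 * alpha u * \<bar>w $ j\<bar> \<le> (\<Sum>i\<in>UNIV. \<bar>u $ i * w $ j + w $ i * u $ j\<bar>)"
proof -
  have "2 * alpha u * \<bar>w $ j\<bar> \<le> 2 * \<bar>u $ j\<bar> * \<bar>w $ j\<bar>"
    using alpha_le_abs[OF assms] by (simp add: mult_right_mono)
  also have "\<dots> = \<bar>u $ j * w $ j + w $ j * u $ j\<bar>"
    by (simp add: abs_mult)
  also have "\<dots> \<le> (\<Sum>i\<in>UNIV. \<bar>u $ i * w $ j + w $ i * u $ j\<bar>)"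
    by (rule member_le_sum) auto
  finally show ?thesis .
qed

lemma column_sum_eq_notin_supp:
  fixes u w :: "real ^ 'n"
  assumes "j \<notin> supp u"
  shows "(\<Sum>i\<in>UNIV. \<bar>u $ i * w $ j + w $ i * u $ j\<bar>) = l1norm u * \<bar>w $ j\<bar>"
  using assms by (simp add: supp_def l1norm_def sum_distrib_right abs_mult)

theorem proposition1:
  fixes ustar w :: "real ^ 'n"
  assumes "ustar \<noteq> 0"
  shows "dir_deriv (fobj ustar) ustar w
           \<ge> min (alpha ustar) ((1/2) * alpha ustar * real (card (supp ustar))) * l1norm w"
proof -
  let ?m = "min (alpha ustar) ((1/2) * alpha ustar * real (card (supp ustar)))"
  let ?col = "\<lambda>j. \<Sum>i\<in>UNIV. \<bar>ustar $ i * w $ j + w $ i * ustar $ j\<bar>"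
  have col: "2 * ?m * \<bar>w $ j\<bar> \<le> ?col j" for j
  proof (cases "j \<in> supp ustar")
    case True
    have "2 * ?m * \<bar>w $ j\<bar> \<le> 2 * alpha ustar * \<bar>w $ j\<bar>"
      by (intro mult_right_mono) auto
    also have "\<dots> \<le> ?col j"
      using True by (rule column_sum_ge_in_supp)
    finally show ?thesis .
  next
    case False
    then show ?thesis
      using alpha_mult_card_supp_le_l1norm[of ustar]
      by (simp add: column_sum_eq_notin_supp mult_right_mono)
  qed
  have "?m * l1norm w = (1/2) * (\<Sum>j\<in>UNIV. 2 * ?m * \<bar>w $ j\<bar>)"
    by (simp add: l1norm_def sum_distrib_left)
  also have "\<dots> \<le> (1/2) * (\<Sum>j\<in>UNIV. ?col j)"
    using col by (intro mult_left_mono sum_mono) auto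
  also have "\<dots> = dir_deriv (fobj ustar) ustar w"
    unfolding dir_deriv_fobj_self by (subst sum.swap) (rule refl)
  finally show ?thesis .
qed

end
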